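(* Let $n\ge 0$ be an integer and $r>0$. Then the function $F(\eta)=\eta^{2}\frac{I_{n+1/2}'(\eta^{-1}r)}{I_{n+1/2}(\eta^{-1}r)}$ is strictly monotonically increasing in $\eta\in(0,\infty)$.
   Context: $I_{n+1/2}$ denotes the modified Bessel function of the first kind of order $n+\tfrac12$. *)

theory Defs
  imports "HOL-Analysis.Analysis"
begin

definition besselI :: "real \<Rightarrow> real \<Rightarrow> real" where
  "besselI \<nu> x = (\<Sum>k. (x / 2) powr (2 * real k + \<nu>) / (fact k * Gamma (real k + \<nu> + 1)))"

end

theory Submission
  imports Defs
begin

text \<open>Write \<open>I\<^sub>\<nu>(x) = (x/2)\<^sup>\<nu> \<Phi>\<^sub>\<nu>((x/2)\<^sup>2)\<close> with the entire power series
  \<open>\<Phi>\<^sub>\<mu>(t) = \<Sum>\<^sub>k t\<^sup>k / (k! \<Gamma>(k+\<mu>+1))\<close>, whose derivative is \<open>\<Phi>\<^sub>\<mu>\<^sub>+\<^sub>1\<close>. This gives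
  \<open>I\<^sub>\<nu>' = (\<nu>/x) I\<^sub>\<nu> + I\<^sub>\<nu>\<^sub>+\<^sub>1\<close>, hence with \<open>x = r/\<eta>\<close>
  \<open>\<eta>\<^sup>2 I\<^sub>\<nu>'(x)/I\<^sub>\<nu>(x) = \<nu>\<eta>\<^sup>3/r + (r\<eta>/2) \<Phi>\<^sub>\<nu>\<^sub>+\<^sub>1(t)/\<Phi>\<^sub>\<nu>(t)\<close>, \<open>t = (r/(2\<eta>))\<^sup>2\<close>.
  The first summand is strictly increasing in \<open>\<eta>\<close>. The coefficients of \<open>\<Phi>\<^sub>\<nu>\<^sub>+\<^sub>1\<close> are those
  of \<open>\<Phi>\<^sub>\<nu>\<close> times the decreasing factor \<open>1/(k+\<nu>+1)\<close>, and a Chebyshev-type rearrangement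
  argument shows that such a quotient of power series decreases in \<open>t\<close>, i.e. increases in \<open>\<eta>\<close>.\<close>

lemma Gamma_plus1_pos: "(x::real) > 0 \<Longrightarrow> Gamma (x + 1) = x * Gamma x"
  by (rule Gamma_plus1) (auto elim!: nonpos_Ints_cases)

lemma Gamma_le_Gamma_plus_nat:
  fixes \<mu> :: real
  assumes "\<mu> \<ge> 0"
  shows "Gamma (\<mu> + 1) \<le> Gamma (real k + \<mu> + 1)"
proof (induction k)
  case 0
  then show ?case by simp
next
  case (Suc k)
  have "Gamma (real k + \<mu> + 1) \<le> (real k + \<mu> + 1) * Gamma (real k + \<mu> + 1)"
    using assms Gamma_real_pos[of "real k + \<mu> + 1"] by simp
  also have "\<dots> = Gamma (real (Suc k) + \<mu> + 1)"
    using assms Gamma_plus1_pos[of "real k + \<mu> + 1"] by (simp add: algebra_simps)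
  finally show ?case using Suc by linarith
qed

lemma power_cross_le:
  fixes s t :: real
  assumes "0 \<le> s" "s \<le> t" "k \<le> j"
  shows "t ^ k * s ^ j \<le> s ^ k * t ^ j"
proof -
  obtain d where j: "j = k + d" using assms(3) le_Suc_ex by blast
  have "t ^ k * s ^ k * s ^ d \<le> t ^ k * s ^ k * t ^ d"
    using assms by (intro mult_left_mono power_mono) auto
  then show ?thesis by (simp add: j power_add ac_simps)
qed

lemma antimono_power_cross_nonpos:
  fixes s t :: real and \<phi> :: "nat \<Rightarrow> real"
  assumes "antimono \<phi>" "0 \<le> s" "s \<le> t"
  shows "(\<phi> k - \<phi> j) * (t ^ k * s ^ j - s ^ k * t ^ j) \<le> 0"
proof (cases "k \<le> j")
  case True
  then have "\<phi> j \<le> \<phi> k" using antimonoD[OF assms(1)] by blast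
  then show ?thesis
    using assms power_cross_le[of s t k j] True by (intro mult_nonneg_nonpos) auto
next
  case False
  then have "\<phi> k \<le> \<phi> j" using antimonoD[OF assms(1), of j k] by simp
  then show ?thesis
    using assms power_cross_le[of s t j k] False by (intro mult_nonpos_nonneg) (auto simp: ac_simps)
qed

lemma sum_power_cross_le:
  fixes s t :: real and b \<phi> :: "nat \<Rightarrow> real"
  assumes "\<And>k. b k \<ge> 0" "antimono \<phi>" "0 \<le> s" "s \<le> t"
  shows "(\<Sum>k\<in>A. b k * \<phi> k * t ^ k) * (\<Sum>j\<in>A. b j * s ^ j)
           \<le> (\<Sum>k\<in>A. b k * \<phi> k * s ^ k) * (\<Sum>j\<in>A. b j * t ^ j)"
proof -
  define T where "T k j = b k * b j * \<phi> k * (t ^ k * s ^ j - s ^ k * t ^ j)" for k j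
  have "(\<Sum>k\<in>A. b k * \<phi> k * t ^ k) * (\<Sum>j\<in>A. b j * s ^ j)
          - (\<Sum>k\<in>A. b k * \<phi> k * s ^ k) * (\<Sum>j\<in>A. b j * t ^ j)
        = (\<Sum>k\<in>A. \<Sum>j\<in>A. b k * \<phi> k * t ^ k * (b j * s ^ j) - b k * \<phi> k * s ^ k * (b j * t ^ j))"
    by (simp only: sum_product sum_subtractf)
  also have "\<dots> = (\<Sum>k\<in>A. \<Sum>j\<in>A. T k j)"
    by (intro sum.cong refl) (simp add: T_def algebra_simps)
  also have "\<dots> = ((\<Sum>k\<in>A. \<Sum>j\<in>A. T k j) + (\<Sum>k\<in>A. \<Sum>j\<in>A. T j k)) / 2"
    using sum.swap[of T A A] by simp
  also have "\<dots> = (\<Sum>k\<in>A. \<Sum>j\<in>A. T k j + T j k) / 2"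
    by (simp add: sum.distrib)
  also have "\<dots> \<le> 0"
  proof -
    have "T k j + T j k = b k * b j * ((\<phi> k - \<phi> j) * (t ^ k * s ^ j - s ^ k * t ^ j))" for k j
      by (simp add: T_def algebra_simps)
    also have "\<dots> k j \<le> 0" for k j
      by (rule mult_nonneg_nonpos[OF mult_nonneg_nonneg[OF assms(1,1)] antimono_power_cross_nonpos[OF assms(2-4)]])
    finally show ?thesis by (intro divide_nonpos_pos sum_nonpos) auto
  qed
  finally show ?thesis by simp
qed

lemma suminf_power_cross_le:
  fixes s t :: real and b \<phi> :: "nat \<Rightarrow> real"
  assumes "\<And>k. b k \<ge> 0" "antimono \<phi>" "0 \<le> s" "s \<le> t"
    and "\<And>x. x \<in> {s, t} \<Longrightarrow> summable (\<lambda>k. b k * x ^ k)"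
    and "\<And>x. x \<in> {s, t} \<Longrightarrow> summable (\<lambda>k. b k * \<phi> k * x ^ k)"
  shows "(\<Sum>k. b k * \<phi> k * t ^ k) * (\<Sum>j. b j * s ^ j)
           \<le> (\<Sum>k. b k * \<phi> k * s ^ k) * (\<Sum>j. b j * t ^ j)"
proof (rule tendsto_le)
  show "(\<lambda>N. (\<Sum>k<N. b k * \<phi> k * t ^ k) * (\<Sum>j<N. b j * s ^ j))
          \<longlonglongrightarrow> (\<Sum>k. b k * \<phi> k * t ^ k) * (\<Sum>j. b j * s ^ j)"
   and "(\<lambda>N. (\<Sum>k<N. b k * \<phi> k * s ^ k) * (\<Sum>j<N. b j * t ^ j))
          \<longlonglongrightarrow> (\<Sum>k. b k * \<phi> k * s ^ k) * (\<Sum>j. b j * t ^ j)"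
    using assms(5,6) by (auto intro!: tendsto_mult summable_LIMSEQ)
  show "\<forall>\<^sub>F N in sequentially. (\<Sum>k<N. b k * \<phi> k * t ^ k) * (\<Sum>j<N. b j * s ^ j)
          \<le> (\<Sum>k<N. b k * \<phi> k * s ^ k) * (\<Sum>j<N. b j * t ^ j)"
    using sum_power_cross_le[OF assms(1-4)] by simp
qed simp

definition besselI_coeff :: "real \<Rightarrow> nat \<Rightarrow> real" where
  "besselI_coeff \<mu> k = 1 / (fact k * Gamma (real k + \<mu> + 1))"

definition besselI_series :: "real \<Rightarrow> real \<Rightarrow> real" where
  "besselI_series \<mu> t = (\<Sum>k. besselI_coeff \<mu> k * t ^ k)"

lemma besselI_coeff_pos: "\<mu> > -1 \<Longrightarrow> besselI_coeff \<mu> k > 0"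
  by (simp add: besselI_coeff_def)

lemma besselI_coeff_plus1:
  assumes "\<mu> > -1"
  shows "besselI_coeff (\<mu> + 1) k = besselI_coeff \<mu> k / (real k + \<mu> + 1)"
proof -
  have "Gamma (real k + (\<mu> + 1) + 1) = (real k + \<mu> + 1) * Gamma (real k + \<mu> + 1)"
    using assms Gamma_plus1_pos[of "real k + \<mu> + 1"] by (simp add: algebra_simps)
  then show ?thesis by (simp add: besselI_coeff_def)
qed

lemma diffs_besselI_coeff: "diffs (besselI_coeff \<mu>) = besselI_coeff (\<mu> + 1)"
proof
  fix n
  have "Gamma (real (Suc n) + \<mu> + 1) = Gamma (real n + (\<mu> + 1) + 1)"
    by (simp add: algebra_simps)
  then show "diffs (besselI_coeff \<mu>) n = besselI_coeff (\<mu> + 1) n"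
    by (simp add: diffs_def besselI_coeff_def del: of_nat_Suc)
qed

lemma summable_besselI_series:
  assumes "\<mu> \<ge> 0"
  shows "summable (\<lambda>k. besselI_coeff \<mu> k * t ^ k)"
proof (rule summable_comparison_test_ev)
  show "summable (\<lambda>k. \<bar>t\<bar> ^ k / (fact k * Gamma (\<mu> + 1)))"
    using summable_divide[OF summable_exp[of "\<bar>t\<bar>"], of "Gamma (\<mu> + 1)"]
    by (simp add: divide_inverse ac_simps)
  have "norm (besselI_coeff \<mu> k * t ^ k) = \<bar>t\<bar> ^ k / (fact k * Gamma (real k + \<mu> + 1))" for k
    using assms by (simp add: besselI_coeff_def abs_mult power_abs)
  also have "\<dots> k \<le> \<bar>t\<bar> ^ k / (fact k * Gamma (\<mu> + 1))" for k
    using assms Gamma_le_Gamma_plus_nat[OF assms, of k]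
    by (intro divide_left_mono mult_left_mono mult_pos_pos) auto
  finally show "\<forall>\<^sub>F k in sequentially. norm (besselI_coeff \<mu> k * t ^ k)
               \<le> \<bar>t\<bar> ^ k / (fact k * Gamma (\<mu> + 1))"
    by simp
qed

lemma besselI_series_pos:
  assumes "\<mu> \<ge> 0" "t \<ge> 0"
  shows "besselI_series \<mu> t > 0"
proof -
  have nonneg: "0 \<le> besselI_coeff \<mu> k * t ^ k" for k
    using assms besselI_coeff_pos[of \<mu> k] by simp
  have "0 < (\<Sum>k<1. besselI_coeff \<mu> k * t ^ k)"
    using assms besselI_coeff_pos[of \<mu> 0] by simp
  also have "\<dots> \<le> besselI_series \<mu> t"
    unfolding besselI_series_def using assms nonneg
    by (intro sum_le_suminf summable_besselI_series) auto
  finally show ?thesis .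
qed

lemma besselI_series_has_real_derivative:
  assumes "\<mu> \<ge> 0"
  shows "(besselI_series \<mu> has_real_derivative besselI_series (\<mu> + 1) t) (at t)"
  unfolding besselI_series_def[abs_def] diffs_besselI_coeff[symmetric]
  by (intro termdiffs_strong_converges_everywhere summable_besselI_series assms)

lemma besselI_series_ratio_antimono:
  assumes "\<mu> \<ge> 0" "0 \<le> s" "s \<le> t"
  shows "besselI_series (\<mu> + 1) t / besselI_series \<mu> t
           \<le> besselI_series (\<mu> + 1) s / besselI_series \<mu> s"
proof -
  define \<phi> where "\<phi> k = 1 / (real k + \<mu> + 1)" for k
  have series_plus1: "besselI_series (\<mu> + 1) x = (\<Sum>k. besselI_coeff \<mu> k * \<phi> k * x ^ k)" for x
    using assms by (simp add: besselI_series_def besselI_coeff_plus1 \<phi>_def)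
  have "antimono \<phi>"
    using assms by (auto intro!: antimonoI divide_left_mono simp: \<phi>_def)
  moreover have "summable (\<lambda>k. besselI_coeff \<mu> k * \<phi> k * x ^ k)" for x
    using assms summable_besselI_series[of "\<mu> + 1" x] by (simp add: besselI_coeff_plus1 \<phi>_def)
  ultimately have "besselI_series (\<mu> + 1) t * besselI_series \<mu> s
               \<le> besselI_series (\<mu> + 1) s * besselI_series \<mu> t"
    unfolding series_plus1 unfolding besselI_series_def
    using assms summable_besselI_series[of \<mu>] besselI_coeff_pos[of \<mu>]
    by (intro suminf_power_cross_le) (auto intro: less_imp_le)
  then show ?thesis
    using assms besselI_series_pos[of \<mu> s] besselI_series_pos[of \<mu> t]
    by (simp add: divide_simps ac_simps)
qed

lemma besselI_eq_besselI_series: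
  assumes "x > 0" "\<nu> \<ge> 0"
  shows "besselI \<nu> x = (x / 2) powr \<nu> * besselI_series \<nu> ((x / 2)\<^sup>2)"
proof -
  have "(x / 2) powr (2 * real k + \<nu>) = (x / 2) powr \<nu> * ((x / 2)\<^sup>2) ^ k" for k
  proof -
    have "(x / 2) powr (2 * real k + \<nu>) = (x / 2) powr real (2 * k) * (x / 2) powr \<nu>"
      by (simp add: powr_add)
    also have "(x / 2) powr real (2 * k) = (x / 2) ^ (2 * k)"
      using assms by (intro powr_realpow) simp
    also have "\<dots> = ((x / 2)\<^sup>2) ^ k"
      by (rule power_mult)
    finally show ?thesis by simp
  qed
  then have "besselI \<nu> x = (\<Sum>k. (x / 2) powr \<nu> * (besselI_coeff \<nu> k * ((x / 2)\<^sup>2) ^ k))"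
    by (simp add: besselI_def besselI_coeff_def)
  also have "\<dots> = (x / 2) powr \<nu> * besselI_series \<nu> ((x / 2)\<^sup>2)"
    unfolding besselI_series_def by (rule suminf_mult[OF summable_besselI_series[OF assms(2)]])
  finally show ?thesis .
qed

lemma besselI_pos: "x > 0 \<Longrightarrow> \<nu> \<ge> 0 \<Longrightarrow> besselI \<nu> x > 0"
  by (simp add: besselI_eq_besselI_series besselI_series_pos)

lemma besselI_has_real_derivative:
  assumes "x > 0" "\<nu> \<ge> 0"
  shows "(besselI \<nu> has_real_derivative \<nu> / x * besselI \<nu> x + besselI (\<nu> + 1) x) (at x)"
proof -
  define P where "P = (x / 2) powr \<nu>"
  define \<Phi>\<^sub>0 where "\<Phi>\<^sub>0 = besselI_series \<nu> ((x / 2)\<^sup>2)"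
  define \<Phi>\<^sub>1 where "\<Phi>\<^sub>1 = besselI_series (\<nu> + 1) ((x / 2)\<^sup>2)"
  have "((\<lambda>y. (y / 2) powr \<nu>) has_real_derivative \<nu> * (x / 2) powr (\<nu> - 1) / 2) (at x)"
    using assms by (auto intro!: derivative_eq_intros)
  also have "\<nu> * (x / 2) powr (\<nu> - 1) / 2 = \<nu> / x * P"
    using assms by (simp add: P_def powr_diff)
  finally have dP: "((\<lambda>y. (y / 2) powr \<nu>) has_real_derivative \<nu> / x * P) (at x)" .
  have "((\<lambda>y. (y / 2)\<^sup>2) has_real_derivative x / 2) (at x)"
    by (auto intro!: derivative_eq_intros)
  from DERIV_chain2[OF besselI_series_has_real_derivative[OF assms(2)] this]
  have d\<Phi>: "((\<lambda>y. besselI_series \<nu> ((y / 2)\<^sup>2)) has_real_derivative \<Phi>\<^sub>1 * (x / 2)) (at x)"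
    unfolding \<Phi>\<^sub>1_def .
  have "((\<lambda>y. (y / 2) powr \<nu> * besselI_series \<nu> ((y / 2)\<^sup>2)) has_real_derivative
          \<nu> / x * P * \<Phi>\<^sub>0 + \<Phi>\<^sub>1 * (x / 2) * P) (at x)"
    using DERIV_mult[OF dP d\<Phi>] unfolding P_def \<Phi>\<^sub>0_def .
  also have "\<nu> / x * P * \<Phi>\<^sub>0 + \<Phi>\<^sub>1 * (x / 2) * P = \<nu> / x * besselI \<nu> x + besselI (\<nu> + 1) x"
    using assms by (simp add: besselI_eq_besselI_series P_def \<Phi>\<^sub>0_def \<Phi>\<^sub>1_def powr_add ac_simps)
  finally show ?thesis
    by (rule has_field_derivative_transform_within_open[where S = "{0<..}"])
       (use assms besselI_eq_besselI_series in auto)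
qed

lemma besselI_ratio_eq:
  assumes "x > 0" "\<nu> \<ge> 0"
  shows "besselI (\<nu> + 1) x / besselI \<nu> x
           = x / 2 * (besselI_series (\<nu> + 1) ((x / 2)\<^sup>2) / besselI_series \<nu> ((x / 2)\<^sup>2))"
  using assms besselI_series_pos[of \<nu> "(x / 2)\<^sup>2"]
  by (simp add: besselI_eq_besselI_series powr_add)

lemma besselI_scaled_log_deriv_eq:
  assumes "r > 0" "\<eta> > 0" "\<nu> \<ge> 0"
  defines "t \<equiv> (r / \<eta> / 2)\<^sup>2"
  shows "\<eta>\<^sup>2 * deriv (besselI \<nu>) (r / \<eta>) / besselI \<nu> (r / \<eta>)
           = \<nu> * \<eta> ^ 3 / r + r * \<eta> / 2 * (besselI_series (\<nu> + 1) t / besselI_series \<nu> t)"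
proof -
  define x where "x = r / \<eta>"
  define R where "R = besselI_series (\<nu> + 1) t / besselI_series \<nu> t"
  have x: "x > 0" using assms by (simp add: x_def)
  have "\<eta>\<^sup>2 * deriv (besselI \<nu>) x / besselI \<nu> x
          = \<eta>\<^sup>2 * (\<nu> / x) + \<eta>\<^sup>2 * (besselI (\<nu> + 1) x / besselI \<nu> x)"
    using DERIV_imp_deriv[OF besselI_has_real_derivative[OF x assms(3)]] besselI_pos[OF x assms(3)]
    by (simp add: field_simps)
  also have "\<dots> = \<eta>\<^sup>2 * (\<nu> / x) + \<eta>\<^sup>2 * (x / 2 * R)"
    using besselI_ratio_eq[OF x assms(3)] by (simp add: R_def t_def x_def)
  also have "\<dots> = \<nu> * \<eta> ^ 3 / r + r * \<eta> / 2 * R"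
    using assms by (simp add: x_def field_simps power2_eq_square power3_eq_cube)
  finally show ?thesis by (simp add: x_def R_def)
qed

theorem besselI_scaled_log_deriv_strict_mono:
  fixes r \<nu> :: real
  assumes "r > 0" "\<nu> > 0"
  shows "strict_mono_on {0<..}
     (\<lambda>\<eta>::real. \<eta>\<^sup>2 * deriv (besselI \<nu>) (r / \<eta>) / besselI \<nu> (r / \<eta>))"
proof -
  define R where "R \<eta> = besselI_series (\<nu> + 1) ((r / \<eta> / 2)\<^sup>2) / besselI_series \<nu> ((r / \<eta> / 2)\<^sup>2)"
    for \<eta>
  have F: "\<eta>\<^sup>2 * deriv (besselI \<nu>) (r / \<eta>) / besselI \<nu> (r / \<eta>) = \<nu> * \<eta> ^ 3 / r + r * \<eta> / 2 * R \<eta>"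
    if "\<eta> > 0" for \<eta>
    unfolding R_def using assms that by (intro besselI_scaled_log_deriv_eq) auto
  have R_nonneg: "R \<eta> \<ge> 0" if "\<eta> > 0" for \<eta>
    unfolding R_def using assms that by (intro divide_nonneg_pos less_imp_le besselI_series_pos) auto
  have R_mono: "R a \<le> R b" if "0 < a" "a < b" for a b
    unfolding R_def using that assms
    by (intro besselI_series_ratio_antimono power_mono divide_right_mono divide_left_mono) auto
  show ?thesis
  proof (rule strict_mono_onI)
    fix a b :: real
    assume ab: "a \<in> {0<..}" "b \<in> {0<..}" "a < b"
    have "\<nu> * a ^ 3 / r < \<nu> * b ^ 3 / r"
      using ab assms by (intro divide_strict_right_mono mult_strict_left_mono power_strict_mono) auto
    moreover have "r * a / 2 * R a \<le> r * b / 2 * R b"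
      using ab assms R_nonneg[of a] R_mono[of a b] by (intro mult_mono) auto
    ultimately show "a\<^sup>2 * deriv (besselI \<nu>) (r / a) / besselI \<nu> (r / a)
                       < b\<^sup>2 * deriv (besselI \<nu>) (r / b) / besselI \<nu> (r / b)"
      using F ab by simp
  qed
qed

theorem corollary2p2:
  fixes n :: nat and r :: real
  assumes "r > 0"
  shows "strict_mono_on {0<..}
     (\<lambda>\<eta>::real. \<eta>\<^sup>2 * deriv (besselI (real n + 1/2)) (r / \<eta>)
                      / besselI (real n + 1/2) (r / \<eta>))"
  by (rule besselI_scaled_log_deriv_strict_mono[OF assms]) simp

end
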